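(* Let $n$ be a positive integer and let $s,t$ be real numbers with $t>0$ and $\dfrac{s}{t} > \dfrac{4}{5} n^2$. Then the maximum of $|\det A|$ over all $A \in \mathcal{G}_s^{n\times n}([0,t])$ equals $$s^{n-1}t + \Big\lfloor \frac{n}{2}\Big\rfloor \Big\lfloor \frac{n-1}{2}\Big\rfloor s^{n-3}t^3.$$
   Context: For a real number $s$, a positive integer $n$ and a set $P \subseteq \mathbb{R}$, $\mathcal{G}_s^{n\times n}(P)$ denotes the set of all $n\times n$ real upper Hessenberg matrices $A=(a_{ij})$ with $a_{i+1,i} = s$ for $1\le i\le n-1$, $a_{ij}=0$ for $i > j+1$, and $a_{ij}\in P$ for all $i \le j$. *)

theory Defs
  imports "Jordan_Normal_Form.Determinant"
begin

text \<open>The set G_s^{n x n}(P) of n x n real upper Hessenberg matrices with constant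
  subdiagonal s and entries on/above the diagonal from P.  Indices are 0-based
  (row i, column j with i,j < n), which is the same as the paper's 1-based indexing
  shifted by one.\<close>
definition hess_set :: "real \<Rightarrow> nat \<Rightarrow> real set \<Rightarrow> real mat set" where
  "hess_set s n P = {A \<in> carrier_mat n n.
     \<forall>i<n. \<forall>j<n. (i = Suc j \<longrightarrow> A $$ (i, j) = s)
                \<and> (i > Suc j \<longrightarrow> A $$ (i, j) = 0)
                \<and> (i \<le> j \<longrightarrow> A $$ (i, j) \<in> P)}"

end

theory Submission
  imports Defs
begin

(* Write D_p for the trailing principal minor of A on rows and columns p, ..., n - 1.  Expanding
   along row p gives D_p = sum_{j >= p} (-s)^(j-p) a_{pj} D_{j+1}; normalised as
   e_p = D_p / ((-s)^(n-1-p) t), with y = t/s, this is the triangular recurrence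
   e_p = v_p - y sum_{k > p} c_{pk} e_k with all v, c in [0, 1].  So a negative e_j is at most y
   times the later nonnegative mass, and a nonnegative e_k exceeds 1 by at most y times the later
   negative mass.  By downward induction the later |e_k| are at most 1 + n^2 y^2, and as
   y n^2 <= 5/4, substituting one estimate into the other bounds the negative mass of
   e_{p+1}, ..., e_{n-1} by y times the number of pairs of indices of opposite sign, at most
   y floor(m/2) ceil(m/2) for m = n - 1 - p.  Hence -1 <= e_0 <= 1 + floor(n/2) floor((n-1)/2) y^2.
   Equality holds for a 0/t matrix with e_p = 1 for p > n/2 and e_p = -y (n - 1 - floor(n/2))
   for 1 <= p <= n/2. *)

section \<open>Determinants of Hessenberg matrices\<close>

text \<open>\<open>hess_tail_det a s n p\<close> is the minor on rows and columns \<open>p, ..., n - 1\<close> of the upper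
  Hessenberg matrix with entries \<open>a\<close> on and above the diagonal and \<open>s\<close> on the subdiagonal,
  expanded along row \<open>p\<close>: deleting row \<open>p\<close> and column \<open>j\<close> leaves a block triangular matrix
  whose first block is triangular with \<open>j - p\<close> diagonal entries \<open>s\<close>.\<close>
function hess_tail_det :: "(nat \<Rightarrow> nat \<Rightarrow> 'a::comm_ring_1) \<Rightarrow> 'a \<Rightarrow> nat \<Rightarrow> nat \<Rightarrow> 'a" where
  "hess_tail_det a s n p =
     (if n \<le> p then 1 else (\<Sum>j\<in>{p..<n}. (- s) ^ (j - p) * a p j * hess_tail_det a s n (Suc j)))"
  by pat_completeness auto
termination by (relation "measure (\<lambda>(a, s, n, p). n - p)") auto

declare hess_tail_det.simps [simp del]

lemma hess_tail_det_empty [simp]: "n \<le> p \<Longrightarrow> hess_tail_det a s n p = 1"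
  by (simp add: hess_tail_det.simps)

lemma hess_tail_det_step:
  "p < n \<Longrightarrow> hess_tail_det a s n p = (\<Sum>j\<in>{p..<n}. (- s) ^ (j - p) * a p j * hess_tail_det a s n (Suc j))"
  by (simp add: hess_tail_det.simps)

lemma hess_tail_det_cong:
  assumes "\<And>i j. p \<le> i \<Longrightarrow> i \<le> j \<Longrightarrow> j < n \<Longrightarrow> a i j = a' i j"
  shows "hess_tail_det a s n p = hess_tail_det a' s n p"
  using assms
proof (induction a s n p rule: hess_tail_det.induct)
  case (1 a s n p)
  then show ?case
    by (cases "n \<le> p") (auto simp: hess_tail_det_step intro!: sum.cong)
qed

lemma hess_tail_det_shift:
  "hess_tail_det (\<lambda>i j. a (Suc i) (Suc j)) s n p = hess_tail_det a s (Suc n) (Suc p)"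
proof (induction "\<lambda>i j. a (Suc i) (Suc j)" s n p rule: hess_tail_det.induct)
  case (1 s n p)
  show ?case
  proof (cases "n \<le> p")
    case False
    then have "hess_tail_det (\<lambda>i j. a (Suc i) (Suc j)) s n p
        = (\<Sum>j\<in>{p..<n}. (- s) ^ (j - p) * a (Suc p) (Suc j) * hess_tail_det a s (Suc n) (Suc (Suc j)))"
      using 1 by (simp add: hess_tail_det_step)
    also have "\<dots> = (\<Sum>j\<in>{Suc p..<Suc n}. (- s) ^ (j - Suc p) * a (Suc p) j * hess_tail_det a s (Suc n) (Suc j))"
      by (simp only: sum.shift_bounds_Suc_ivl) simp
    finally show ?thesis
      using False by (simp add: hess_tail_det_step)
  qed simp
qed

text \<open>The two matrices are the minors of the only nonzero entries \<open>a 0 0\<close> and \<open>s\<close> of the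
  first column.\<close>
lemma hess_tail_det_first_column:
  assumes "0 < n"
  shows "hess_tail_det a s (Suc n) 0 = a 0 0 * hess_tail_det (\<lambda>i j. a (Suc i) (Suc j)) s n 0
      - s * hess_tail_det (\<lambda>i j. if i = 0 then a 0 (Suc j) else a (Suc i) (Suc j)) s n 0"
proof -
  let ?a1 = "\<lambda>i j. if i = 0 then a 0 (Suc j) else a (Suc i) (Suc j)"
  have tail: "hess_tail_det ?a1 s n (Suc j) = hess_tail_det a s (Suc n) (Suc (Suc j))" for j
    by (subst hess_tail_det_shift [symmetric]) (rule hess_tail_det_cong, simp)
  have "hess_tail_det a s (Suc n) 0
      = a 0 0 * hess_tail_det a s (Suc n) 1
        - s * (\<Sum>j<n. (- s) ^ j * a 0 (Suc j) * hess_tail_det a s (Suc n) (Suc (Suc j)))"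
    by (simp add: hess_tail_det_step atLeast0LessThan sum.lessThan_Suc_shift sum_distrib_left
        sum_negf mult.assoc del: sum.lessThan_Suc)
  also have "hess_tail_det a s (Suc n) 1 = hess_tail_det (\<lambda>i j. a (Suc i) (Suc j)) s n 0"
    by (simp add: hess_tail_det_shift)
  also have "(\<Sum>j<n. (- s) ^ j * a 0 (Suc j) * hess_tail_det a s (Suc n) (Suc (Suc j)))
      = hess_tail_det ?a1 s n 0"
    using assms by (simp add: hess_tail_det_step atLeast0LessThan tail)
  finally show ?thesis .
qed

definition hessenberg_mat :: "'a::zero \<Rightarrow> nat \<Rightarrow> 'a mat set" where
  "hessenberg_mat s n = {A \<in> carrier_mat n n.
     \<forall>i<n. \<forall>j<n. (i = Suc j \<longrightarrow> A $$ (i, j) = s) \<and> (Suc j < i \<longrightarrow> A $$ (i, j) = 0)}"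

lemma hessenberg_mat_subdiag: "A \<in> hessenberg_mat s n \<Longrightarrow> Suc j < n \<Longrightarrow> A $$ (Suc j, j) = s"
  by (simp add: hessenberg_mat_def)

lemma mat_delete_hessenberg_mat:
  assumes "A \<in> hessenberg_mat s (Suc n)"
  shows "mat_delete A 0 0 \<in> hessenberg_mat s n"
    and "mat_delete A 1 0 \<in> hessenberg_mat s n"
    and "\<And>i j. i < n \<Longrightarrow> j < n \<Longrightarrow> mat_delete A 0 0 $$ (i, j) = A $$ (Suc i, Suc j)"
    and "\<And>i j. i < n \<Longrightarrow> j < n \<Longrightarrow>
           mat_delete A 1 0 $$ (i, j) = (if i = 0 then A $$ (0, Suc j) else A $$ (Suc i, Suc j))"
  using assms by (auto simp: hessenberg_mat_def mat_delete_def)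

lemma det_hessenberg_first_column:
  assumes A: "A \<in> hessenberg_mat s (Suc n)" and n: "0 < n"
  shows "det A = A $$ (0, 0) * det (mat_delete A 0 0) - s * det (mat_delete A 1 0)"
proof -
  have carrier: "A \<in> carrier_mat (Suc n) (Suc n)"
    using A by (simp add: hessenberg_mat_def)
  have subdiag: "A $$ (Suc 0, 0) = s"
    using hessenberg_mat_subdiag [OF A, of 0] n by simp
  have "det A = (\<Sum>i<Suc n. A $$ (i, 0) * cofactor A i 0)"
    by (rule laplace_expansion_column [OF carrier]) simp
  also have "\<dots> = (\<Sum>i\<in>{0, 1}. A $$ (i, 0) * cofactor A i 0)"
    using A n by (intro sum.mono_neutral_right) (auto simp: hessenberg_mat_def)
  also have "\<dots> = A $$ (0, 0) * det (mat_delete A 0 0) - s * det (mat_delete A 1 0)"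
    by (simp add: cofactor_def subdiag)
  finally show ?thesis .
qed

lemma det_hessenberg_mat:
  "A \<in> hessenberg_mat s n \<Longrightarrow> det A = hess_tail_det (\<lambda>i j. A $$ (i, j)) s n 0"
proof (induction n arbitrary: A)
  case 0
  then show ?case by (simp add: hessenberg_mat_def det_def)
next
  case (Suc n)
  note minors = mat_delete_hessenberg_mat [OF Suc.prems]
  show ?case
  proof (cases "n = 0")
    case True
    with Suc.prems show ?thesis
      by (auto simp: hessenberg_mat_def det_single hess_tail_det_step)
  next
    case False
    have "det (mat_delete A 0 0) = hess_tail_det (\<lambda>i j. A $$ (Suc i, Suc j)) s n 0"
      using Suc.IH [OF minors(1)] minors(3) by (auto intro!: hess_tail_det_cong)
    moreover have "det (mat_delete A 1 0)
        = hess_tail_det (\<lambda>i j. if i = 0 then A $$ (0, Suc j) else A $$ (Suc i, Suc j)) s n 0"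
      using Suc.IH [OF minors(2)] minors(4) by (auto intro!: hess_tail_det_cong)
    ultimately show ?thesis
      using det_hessenberg_first_column [OF Suc.prems] False
        hess_tail_det_first_column [of n "\<lambda>i j. A $$ (i, j)" s] by simp
  qed
qed

definition scaled_tail_det :: "(nat \<Rightarrow> nat \<Rightarrow> 'a::field) \<Rightarrow> 'a \<Rightarrow> 'a \<Rightarrow> nat \<Rightarrow> nat \<Rightarrow> 'a" where
  "scaled_tail_det a s t n p = hess_tail_det a s n p / ((- s) ^ (n - 1 - p) * t)"

lemma scaled_tail_det_rec:
  assumes s: "s \<noteq> 0" and t: "t \<noteq> 0" and p: "p < n"
  shows "scaled_tail_det a s t n p
    = a p (n - 1) / t - t / s * (\<Sum>k\<in>{Suc p..<n}. a p (k - 1) / t * scaled_tail_det a s t n k)"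
proof -
  let ?D = "hess_tail_det a s n" and ?w = "\<lambda>k. (- s) ^ (n - 1 - k)"
  have w_split: "?w p = (- s) ^ (k - 1 - p) * (- s) * ?w k" if "k \<in> {Suc p..<n}" for k
  proof -
    have "n - 1 - p = (k - 1 - p) + 1 + (n - 1 - k)"
      using that by auto
    then show ?thesis
      by (simp only: power_add) simp
  qed
  have "?D p = (\<Sum>k\<in>{Suc p..<Suc n}. (- s) ^ (k - 1 - p) * a p (k - 1) * ?D k)"
    unfolding hess_tail_det_step [OF p] sum.shift_bounds_Suc_ivl by simp
  also have "\<dots> = (\<Sum>k\<in>{Suc p..<n}. (- s) ^ (k - 1 - p) * a p (k - 1) * ?D k) + ?w p * a p (n - 1)"
    using p by (subst sum.atLeastLessThan_Suc) auto
  also have "(\<Sum>k\<in>{Suc p..<n}. (- s) ^ (k - 1 - p) * a p (k - 1) * ?D k)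
      = - (?w p * t) * (t / s * (\<Sum>k\<in>{Suc p..<n}. a p (k - 1) / t * scaled_tail_det a s t n k))"
    unfolding sum_distrib_left
  proof (rule sum.cong [OF refl])
    fix k assume k: "k \<in> {Suc p..<n}"
    have alg: "x * b * (e * (w * t)) = - (x * (- s) * w * t) * (t / s * (b / t * e))" for x b e w
      using s t by (simp add: field_simps)
    have "?D k = scaled_tail_det a s t n k * (?w k * t)"
      using s t by (simp add: scaled_tail_det_def)
    then show "(- s) ^ (k - 1 - p) * a p (k - 1) * ?D k
        = - (?w p * t) * (t / s * (a p (k - 1) / t * scaled_tail_det a s t n k))"
      unfolding w_split [OF k] by (simp only: alg)
  qed
  finally show ?thesis
    using s t by (simp add: scaled_tail_det_def field_simps)
qed

section \<open>A triangular recurrence with coefficients in [0, 1]\<close>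

text \<open>By \<open>scaled_tail_det_rec\<close>, the normalised minors of a matrix in \<open>hess_set s n {0..t}\<close>
  satisfy this system with \<open>y = t / s\<close>, \<open>v p = a p (n - 1) / t\<close> and \<open>c p k = a p (k - 1) / t\<close>.\<close>
definition unit_tri_system ::
    "real \<Rightarrow> nat \<Rightarrow> (nat \<Rightarrow> real) \<Rightarrow> (nat \<Rightarrow> nat \<Rightarrow> real) \<Rightarrow> (nat \<Rightarrow> real) \<Rightarrow> bool" where
  "unit_tri_system y d v c e \<longleftrightarrow>
     (\<forall>j<d. v j \<in> {0..1} \<and> (\<forall>k\<in>{Suc j..<d}. c j k \<in> {0..1}) \<and>
            e j = v j - y * (\<Sum>k\<in>{Suc j..<d}. c j k * e k))"

lemma unit_tri_systemD:
  assumes "unit_tri_system y d v c e" and "j < d"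
  shows "0 \<le> v j" "v j \<le> 1"
    and "\<And>k. k \<in> {Suc j..<d} \<Longrightarrow> 0 \<le> c j k \<and> c j k \<le> 1"
    and "e j = v j - y * (\<Sum>k\<in>{Suc j..<d}. c j k * e k)"
  using assms unfolding unit_tri_system_def by auto

lemma unit_tri_system_upper:
  assumes sys: "unit_tri_system y d v c e" and y: "0 \<le> y" and j: "j < d"
  shows "e j \<le> 1 + y * (\<Sum>k\<in>{k\<in>{Suc j..<d}. e k < 0}. - e k)"
proof -
  have "- (\<Sum>k\<in>{Suc j..<d}. c j k * e k) \<le> (\<Sum>k\<in>{Suc j..<d}. if e k < 0 then - e k else 0)"
    unfolding sum_negf [symmetric]
  proof (rule sum_mono)
    fix k assume "k \<in> {Suc j..<d}"
    with unit_tri_systemD(3) [OF sys j] have "0 \<le> c j k" "c j k \<le> 1"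
      by auto
    then show "- (c j k * e k) \<le> (if e k < 0 then - e k else 0)"
      by (auto simp: mult_le_cancel_right1)
  qed
  also have "\<dots> = (\<Sum>k\<in>{k\<in>{Suc j..<d}. e k < 0}. - e k)"
    by (rule sum.inter_filter [symmetric]) simp
  finally have "- y * (\<Sum>k\<in>{Suc j..<d}. c j k * e k) \<le> y * (\<Sum>k\<in>{k\<in>{Suc j..<d}. e k < 0}. - e k)"
    using y by (metis minus_mult_commute mult_left_mono)
  moreover have "e j = v j - y * (\<Sum>k\<in>{Suc j..<d}. c j k * e k)" "v j \<le> 1"
    using unit_tri_systemD(2,4) [OF sys j] by blast+
  ultimately show ?thesis
    by linarith
qed

lemma unit_tri_system_lower:
  assumes sys: "unit_tri_system y d v c e" and y: "0 \<le> y" and j: "j < d"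
  shows "- e j \<le> y * (\<Sum>k\<in>{k\<in>{Suc j..<d}. 0 \<le> e k}. e k)"
proof -
  have "(\<Sum>k\<in>{Suc j..<d}. c j k * e k) \<le> (\<Sum>k\<in>{Suc j..<d}. if 0 \<le> e k then e k else 0)"
  proof (rule sum_mono)
    fix k assume "k \<in> {Suc j..<d}"
    with unit_tri_systemD(3) [OF sys j] have "0 \<le> c j k" "c j k \<le> 1"
      by auto
    then show "c j k * e k \<le> (if 0 \<le> e k then e k else 0)"
      by (auto simp: mult_left_le_one_le mult_nonneg_nonpos)
  qed
  also have "\<dots> = (\<Sum>k\<in>{k\<in>{Suc j..<d}. 0 \<le> e k}. e k)"
    by (rule sum.inter_filter [symmetric]) simp
  finally have "y * (\<Sum>k\<in>{Suc j..<d}. c j k * e k) \<le> y * (\<Sum>k\<in>{k\<in>{Suc j..<d}. 0 \<le> e k}. e k)"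
    using y by (rule mult_left_mono)
  moreover have "e j = v j - y * (\<Sum>k\<in>{Suc j..<d}. c j k * e k)" "0 \<le> v j"
    using unit_tri_systemD(1,4) [OF sys j] by blast+
  ultimately show ?thesis
    by linarith
qed

lemma sum_card_less_pairs:
  fixes J K :: "'a::linorder set"
  assumes fin: "finite J" "finite K" and disj: "J \<inter> K = {}"
  shows "(\<Sum>j\<in>J. card {k\<in>K. j < k}) + (\<Sum>k\<in>K. card {j\<in>J. k < j}) = card J * card K"
proof -
  have "(\<Sum>k\<in>K. card {j\<in>J. k < j}) = (\<Sum>k\<in>K. \<Sum>j\<in>J. of_bool (k < j))"
    using fin by (simp add: Int_def)
  also have "\<dots> = (\<Sum>j\<in>J. card {k\<in>K. k < j})"
    using fin by (subst sum.swap) (simp add: Int_def)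
  finally have swap: "(\<Sum>k\<in>K. card {j\<in>J. k < j}) = (\<Sum>j\<in>J. card {k\<in>K. k < j})" .
  have split: "card {k\<in>K. j < k} + card {k\<in>K. k < j} = card K" if "j \<in> J" for j
  proof -
    have "j \<notin> K"
      using that disj by blast
    then have "j < k \<or> k < j" if "k \<in> K" for k
      using that by (cases j k rule: linorder_cases) auto
    then have "{k\<in>K. j < k} \<union> {k\<in>K. k < j} = K"
      by blast
    moreover have "card ({k\<in>K. j < k} \<union> {k\<in>K. k < j}) = card {k\<in>K. j < k} + card {k\<in>K. k < j}"
      using fin(2) by (intro card_Un_disjoint) auto
    ultimately show ?thesis
      by simp
  qed
  show ?thesis
    unfolding swap sum.distrib [symmetric] using split by simp
qed

lemma mult_le_half_prod:
  fixes a b :: nat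
  shows "a * b \<le> ((a + b) div 2) * ((a + b + 1) div 2)"
proof -
  define h h' where "h = (a + b) div 2" and "h' = (a + b + 1) div 2"
  have sum: "h + h' = a + b" and gap: "h \<le> h'" "h' \<le> h + 1"
    unfolding h_def h'_def by presburger+
  have "a \<le> h \<or> h' \<le> a"
    using gap by linarith
  then have "0 \<le> (int a - int h) * (int a - int h')"
    using gap by (auto intro: mult_nonpos_nonpos)
  also have "\<dots> = int h * int h' - int a * (int h + int h' - int a)"
    by (simp add: algebra_simps)
  also have "int h + int h' - int a = int b"
    using sum by simp
  finally have "int a * int b \<le> int h * int h'"
    by simp
  then show ?thesis
    unfolding h_def h'_def by (metis of_nat_le_iff of_nat_mult)
qed

lemma interleaved_P_le_card:
  fixes J K :: "'a::linorder set" and N P :: "'a \<Rightarrow> real"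
  assumes fin: "finite K" and y: "0 \<le> y" and B: "0 \<le> B" "\<And>k. k \<in> K \<Longrightarrow> P k \<le> B"
    and N_le: "\<And>j. j \<in> J \<Longrightarrow> N j \<le> y * (\<Sum>k\<in>{k\<in>K. j < k}. P k)"
    and P_le: "P k \<le> 1 + y * (\<Sum>l\<in>{l\<in>J. k < l}. N l)"
  shows "P k \<le> 1 + y\<^sup>2 * real (card K) * B * real (card {l\<in>J. k < l})"
proof -
  have N_B: "N j \<le> y * (real (card K) * B)" if "j \<in> J" for j
  proof -
    have "(\<Sum>k\<in>{k\<in>K. j < k}. P k) \<le> real (card {k\<in>K. j < k}) * B"
      using B(2) by (intro sum_bounded_above) auto
    also have "\<dots> \<le> real (card K) * B"
      using fin B(1) by (intro mult_right_mono) (auto intro: card_mono)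
    finally show ?thesis
      using N_le [OF that] y by (meson mult_left_mono order_trans)
  qed
  have "(\<Sum>l\<in>{l\<in>J. k < l}. N l) \<le> real (card {l\<in>J. k < l}) * (y * (real (card K) * B))"
    using N_B by (intro sum_bounded_above) auto
  then have "y * (\<Sum>l\<in>{l\<in>J. k < l}. N l) \<le> y\<^sup>2 * real (card K) * B * real (card {l\<in>J. k < l})"
    using y by (auto simp: power2_eq_square mult_ac dest: mult_left_mono)
  then show ?thesis
    using P_le by linarith
qed

text \<open>The second order term left by substituting one estimate into the other is absorbed by
  \<open>small\<close> into the number of pairs \<open>k < l\<close> in \<open>K \<times> J\<close>; with the pairs \<open>j < k\<close> in
  \<open>J \<times> K\<close> these are all of \<open>J \<times> K\<close>.\<close>
lemma interleaved_sum_le_card_pairs: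
  fixes J K :: "'a::linorder set" and N P :: "'a \<Rightarrow> real"
  assumes fin: "finite J" "finite K" and disj: "J \<inter> K = {}"
    and y: "0 \<le> y" and B: "0 \<le> B" "\<And>k. k \<in> K \<Longrightarrow> P k \<le> B"
    and N_le: "\<And>j. j \<in> J \<Longrightarrow> N j \<le> y * (\<Sum>k\<in>{k\<in>K. j < k}. P k)"
    and P_le: "\<And>k. k \<in> K \<Longrightarrow> P k \<le> 1 + y * (\<Sum>l\<in>{l\<in>J. k < l}. N l)"
    and small: "y\<^sup>2 * real (card J * card K) * B \<le> 1"
  shows "(\<Sum>j\<in>J. N j) \<le> y * real (card J * card K)"
proof -
  define S where "S k = real (card {l\<in>J. k < l})" for k
  define C where "C = y\<^sup>2 * real (card K) * B"
  have P_S: "P k \<le> 1 + C * S k" if "k \<in> K" for k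
    unfolding C_def S_def using interleaved_P_le_card [OF fin(2) y B N_le P_le [OF that]] by blast
  define I where "I = (\<Sum>k\<in>K. S k)"
  have I0: "0 \<le> I"
    unfolding I_def S_def by (simp add: sum_nonneg)
  have T_le: "(\<Sum>j\<in>J. \<Sum>k\<in>{k\<in>K. j < k}. S k) \<le> real (card J) * I"
  proof (rule sum_bounded_above)
    fix j assume "j \<in> J"
    show "(\<Sum>k\<in>{k\<in>K. j < k}. S k) \<le> I"
      unfolding I_def S_def using fin by (intro sum_mono2) auto
  qed
  have "C * (\<Sum>j\<in>J. \<Sum>k\<in>{k\<in>K. j < k}. S k) \<le> C * (real (card J) * I)"
    using T_le y B by (intro mult_left_mono) (auto simp: C_def)
  also have "\<dots> = (C * real (card J)) * I"
    by (simp add: mult_ac)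
  also have "\<dots> \<le> 1 * I"
    using small I0 by (intro mult_right_mono) (simp_all add: C_def mult_ac)
  finally have CT: "C * (\<Sum>j\<in>J. \<Sum>k\<in>{k\<in>K. j < k}. S k) \<le> I"
    by simp
  have "(\<Sum>j\<in>J. N j) \<le> (\<Sum>j\<in>J. y * (\<Sum>k\<in>{k\<in>K. j < k}. 1 + C * S k))"
  proof (rule sum_mono)
    fix j assume j: "j \<in> J"
    have "(\<Sum>k\<in>{k\<in>K. j < k}. P k) \<le> (\<Sum>k\<in>{k\<in>K. j < k}. 1 + C * S k)"
      using P_S by (intro sum_mono) auto
    then show "N j \<le> y * (\<Sum>k\<in>{k\<in>K. j < k}. 1 + C * S k)"
      using N_le [OF j] y by (meson mult_left_mono order_trans)
  qed
  also have "\<dots> = y * ((\<Sum>j\<in>J. real (card {k\<in>K. j < k})) + C * (\<Sum>j\<in>J. \<Sum>k\<in>{k\<in>K. j < k}. S k))"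
    by (simp add: sum.distrib sum_distrib_left distrib_left)
  also have "\<dots> \<le> y * ((\<Sum>j\<in>J. real (card {k\<in>K. j < k})) + I)"
    using CT y by (intro mult_left_mono) auto
  also have "(\<Sum>j\<in>J. real (card {k\<in>K. j < k})) + I = real (card J * card K)"
    unfolding I_def S_def of_nat_sum [symmetric] of_nat_add [symmetric]
    using sum_card_less_pairs [OF fin disj] by simp
  finally show ?thesis .
qed

lemma unit_tri_system_neg_sum_le:
  assumes sys: "unit_tri_system y d v c e" and y: "0 \<le> y"
    and B: "0 \<le> B" "\<And>k. k \<in> {q..<d} \<Longrightarrow> \<bar>e k\<bar> \<le> B"
    and small: "y\<^sup>2 * (real (d - q))\<^sup>2 * B \<le> 1"
  shows "(\<Sum>k\<in>{k\<in>{q..<d}. e k < 0}. - e k) \<le> y * real ((d - q) div 2 * ((d - q + 1) div 2))"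
proof -
  define J K where "J = {k\<in>{q..<d}. e k < 0}" and "K = {k\<in>{q..<d}. 0 \<le> e k}"
  have fin: "finite J" "finite K" and disj: "J \<inter> K = {}"
    by (auto simp: J_def K_def)
  have card_JK: "card J + card K = d - q"
  proof -
    have "J \<union> K = {q..<d}"
      by (auto simp: J_def K_def)
    then show ?thesis
      using fin disj by (metis card_Un_disjoint card_atLeastLessThan)
  qed
  have later_K: "{k\<in>{Suc j..<d}. 0 \<le> e k} = {k\<in>K. j < k}" if "j \<in> J" for j
    using that by (auto simp: J_def K_def)
  have later_J: "{k\<in>{Suc j..<d}. e k < 0} = {l\<in>J. j < l}" if "j \<in> K" for j
    using that by (auto simp: J_def K_def)
  have "card J * card K \<le> (d - q) * (d - q)"
    using card_JK by (intro mult_le_mono) auto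
  then have "y\<^sup>2 * real (card J * card K) * B \<le> y\<^sup>2 * (real (d - q))\<^sup>2 * B"
    using B(1) by (intro mult_right_mono mult_left_mono) (auto simp: power2_eq_square simp flip: of_nat_mult)
  then have "(\<Sum>j\<in>J. - e j) \<le> y * real (card J * card K)"
  proof (intro interleaved_sum_le_card_pairs [OF fin disj y B(1)])
    show "e k \<le> B" if "k \<in> K" for k
      using B(2) [of k] that by (auto simp: K_def)
    show "- e j \<le> y * (\<Sum>k\<in>{k\<in>K. j < k}. e k)" if "j \<in> J" for j
      unfolding later_K [OF that, symmetric] using that
      by (intro unit_tri_system_lower [OF sys y]) (simp add: J_def)
    show "e k \<le> 1 + y * (\<Sum>l\<in>{l\<in>J. k < l}. - e l)" if "k \<in> K" for k
      unfolding later_J [OF that, symmetric] using that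
      by (intro unit_tri_system_upper [OF sys y]) (simp add: K_def)
  qed (use small in linarith)
  also have "\<dots> \<le> y * real ((d - q) div 2 * ((d - q + 1) div 2))"
  proof (rule mult_left_mono [OF _ y])
    show "real (card J * card K) \<le> real ((d - q) div 2 * ((d - q + 1) div 2))"
      using mult_le_half_prod [of "card J" "card K"] unfolding card_JK of_nat_le_iff .
  qed
  finally show ?thesis
    by (simp add: J_def)
qed

lemma small_parameter_bound:
  fixes y :: real
  assumes y: "0 \<le> y" and ym: "y * real m ^ 2 \<le> 5 / 4" and d: "d < m"
  shows "y * real d * (1 + (y * real m)\<^sup>2) \<le> 1"
proof (cases "d = 0")
  case False
  define z where "z = y * real m"
  have "2 \<le> real m"
    using False d by linarith
  then have "z * 2 \<le> z * real m"
    using y unfolding z_def by (intro mult_left_mono) auto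
  also have "\<dots> \<le> 5 / 4"
    using ym by (simp add: z_def power2_eq_square mult_ac)
  finally have z: "0 \<le> z" "z \<le> 5 / 8"
    using y by (simp_all add: z_def)
  have "y * real d \<le> z"
    using y d by (simp add: z_def mult_left_mono)
  moreover have "z\<^sup>2 \<le> (5 / 8)\<^sup>2"
    using z by (intro power_mono)
  ultimately have "y * real d * (1 + z\<^sup>2) \<le> 5 / 8 * (1 + (5 / 8)\<^sup>2)"
    using y z by (intro mult_mono) auto
  also have "\<dots> \<le> 1"
    by (simp add: power2_eq_square)
  finally show ?thesis
    by (simp add: z_def)
qed simp

lemma unit_tri_system_step_bound:
  assumes sys: "unit_tri_system y m v c e" and y: "0 \<le> y" and p: "p < m"
    and B: "1 \<le> B" and later: "\<And>k. k \<in> {Suc p..<m} \<Longrightarrow> \<bar>e k\<bar> \<le> B"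
    and small: "y * real (m - Suc p) * B \<le> 1"
  shows "- 1 \<le> e p" and "e p \<le> 1 + real ((m - p) div 2 * ((m - p - 1) div 2)) * y\<^sup>2"
proof -
  define w where "w = y * real (m - Suc p)"
  have w0: "0 \<le> w"
    using y by (simp add: w_def)
  have "w \<le> w * B"
    using mult_left_mono [OF B w0] by simp
  moreover have "w * (w * B) \<le> w"
    using mult_left_mono [OF small [folded w_def] w0] by simp
  moreover have "y\<^sup>2 * (real (m - Suc p))\<^sup>2 * B = w * (w * B)"
    by (simp add: w_def power2_eq_square mult_ac)
  ultimately have "y\<^sup>2 * (real (m - Suc p))\<^sup>2 * B \<le> 1"
    using small [folded w_def] by linarith
  from unit_tri_system_neg_sum_le [OF sys y _ later this]
  have "(\<Sum>k\<in>{k\<in>{Suc p..<m}. e k < 0}. - e k) \<le> y * real ((m - p) div 2 * ((m - p - 1) div 2))"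
    using p B by (simp add: Suc_diff_Suc mult.commute)
  from mult_left_mono [OF this y]
  show "e p \<le> 1 + real ((m - p) div 2 * ((m - p - 1) div 2)) * y\<^sup>2"
    using unit_tri_system_upper [OF sys y p] by (simp add: power2_eq_square mult_ac)
  have "(\<Sum>k\<in>{k\<in>{Suc p..<m}. 0 \<le> e k}. e k) \<le> real (card {k\<in>{Suc p..<m}. 0 \<le> e k}) * B"
    using later by (intro sum_bounded_above) (simp add: abs_le_iff)
  also have "\<dots> \<le> real (m - Suc p) * B"
  proof (rule mult_right_mono)
    have "{k\<in>{Suc p..<m}. 0 \<le> e k} \<subseteq> {Suc p..<m}"
      by blast
    from card_mono [OF _ this] show "real (card {k\<in>{Suc p..<m}. 0 \<le> e k}) \<le> real (m - Suc p)"
      by simp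
  qed (use B in simp)
  finally have "y * (\<Sum>k\<in>{k\<in>{Suc p..<m}. 0 \<le> e k}. e k) \<le> w * B"
    using y unfolding w_def by (simp add: mult_left_mono mult.assoc)
  then show "- 1 \<le> e p"
    using unit_tri_system_lower [OF sys y p] small [folded w_def] by linarith
qed

lemma unit_tri_system_abs_le:
  assumes sys: "unit_tri_system y m v c e" and y: "0 \<le> y" and ym: "y * real m ^ 2 \<le> 5 / 4"
    and p: "p < m"
  shows "\<bar>e p\<bar> \<le> 1 + real ((m - p) div 2 * ((m - p - 1) div 2)) * y\<^sup>2"
  using p
proof (induction "m - p" arbitrary: p rule: less_induct)
  case less
  define B where "B = 1 + (y * real m)\<^sup>2"
  have later: "\<bar>e k\<bar> \<le> B" if k: "k \<in> {Suc p..<m}" for k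
  proof -
    have "(m - k) div 2 * ((m - k - 1) div 2) \<le> m * m"
      by (intro mult_le_mono) auto
    then have "real ((m - k) div 2 * ((m - k - 1) div 2)) \<le> (real m)\<^sup>2"
      unfolding power2_eq_square of_nat_mult [symmetric] of_nat_le_iff .
    then have "real ((m - k) div 2 * ((m - k - 1) div 2)) * y\<^sup>2 \<le> (real m)\<^sup>2 * y\<^sup>2"
      by (rule mult_right_mono) simp
    moreover have "\<bar>e k\<bar> \<le> 1 + real ((m - k) div 2 * ((m - k - 1) div 2)) * y\<^sup>2"
      using k less.prems by (intro less.hyps) auto
    moreover have "B = 1 + (real m)\<^sup>2 * y\<^sup>2"
      by (simp add: B_def power_mult_distrib)
    ultimately show ?thesis
      by linarith
  qed
  have "y * real (m - Suc p) * B \<le> 1"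
    unfolding B_def using less.prems by (intro small_parameter_bound [OF y ym]) auto
  with unit_tri_system_step_bound [OF sys y less.prems _ later]
  have "- 1 \<le> e p" "e p \<le> 1 + real ((m - p) div 2 * ((m - p - 1) div 2)) * y\<^sup>2"
    by (simp_all add: B_def)
  moreover have "0 \<le> real ((m - p) div 2 * ((m - p - 1) div 2)) * y\<^sup>2"
    by simp
  ultimately show ?case
    by (intro abs_leI) linarith+
qed

section \<open>Matrices with entries in [0, t]\<close>

lemma hess_set_subset_hessenberg_mat: "hess_set s n P \<subseteq> hessenberg_mat s n"
  by (auto simp: hess_set_def hessenberg_mat_def)

lemma hess_set_unit_tri_system:
  assumes A: "A \<in> hess_set s n {0..t}" and s: "0 < s" and t: "0 < t"
  shows "unit_tri_system (t / s) n (\<lambda>p. A $$ (p, n - 1) / t) (\<lambda>p k. A $$ (p, k - 1) / t)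
           (scaled_tail_det (\<lambda>i j. A $$ (i, j)) s t n)"
  unfolding unit_tri_system_def
proof (intro allI impI conjI ballI)
  fix p assume p: "p < n"
  have entry: "A $$ (p, j) / t \<in> {0..1}" if "p \<le> j" "j < n" for j
    using A that t by (auto simp: hess_set_def)
  show "A $$ (p, n - 1) / t \<in> {0..1}"
    using p by (intro entry) auto
  show "A $$ (p, k - 1) / t \<in> {0..1}" if "k \<in> {Suc p..<n}" for k
    using that by (intro entry) auto
  show "scaled_tail_det (\<lambda>i j. A $$ (i, j)) s t n p = A $$ (p, n - 1) / t
      - t / s * (\<Sum>k\<in>{Suc p..<n}. A $$ (p, k - 1) / t * scaled_tail_det (\<lambda>i j. A $$ (i, j)) s t n k)"
    using s t p by (intro scaled_tail_det_rec) auto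
qed

lemma abs_det_eq_scaled_tail_det:
  fixes A :: "real mat"
  assumes A: "A \<in> hessenberg_mat s n" and s: "0 < s" and t: "0 < t"
  shows "\<bar>det A\<bar> = \<bar>scaled_tail_det (\<lambda>i j. A $$ (i, j)) s t n 0\<bar> * (s ^ (n - 1) * t)"
proof -
  have "(- s) ^ (n - 1) * t \<noteq> 0"
    using s t by simp
  then have "det A = scaled_tail_det (\<lambda>i j. A $$ (i, j)) s t n 0 * ((- s) ^ (n - 1) * t)"
    by (simp add: det_hessenberg_mat [OF A] scaled_tail_det_def)
  then show ?thesis
    using s t by (simp add: abs_mult power_abs)
qed

lemma scaled_bound_eq:
  fixes s t :: real
  assumes s: "0 < s"
  shows "s ^ (n - 1) * t * (1 + real (n div 2 * ((n - 1) div 2)) * (t / s)\<^sup>2)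
       = s ^ (n - 1) * t + real (n div 2 * ((n - 1) div 2)) * s ^ (n - 3) * t ^ 3"
proof (cases "n < 3")
  case True
  then have "n div 2 * ((n - 1) div 2) = 0"
    by (auto simp: less_Suc_eq numeral_3_eq_3)
  then show ?thesis
    unfolding \<open>n div 2 * ((n - 1) div 2) = 0\<close> by simp
next
  case False
  then have "n - 1 = (n - 3) + 2"
    by simp
  then have "s ^ (n - 1) = s ^ (n - 3) * s\<^sup>2"
    by (simp only: power_add)
  then show ?thesis
    using s by (simp add: field_simps power2_eq_square power3_eq_cube)
qed

lemma abs_det_hess_set_le:
  assumes A: "A \<in> hess_set s n {0..t}" and s: "0 < s" and t: "0 < t" and n: "0 < n"
    and small: "t / s * real n ^ 2 \<le> 5 / 4"
  shows "\<bar>det A\<bar> \<le> s ^ (n - 1) * t * (1 + real (n div 2 * ((n - 1) div 2)) * (t / s)\<^sup>2)"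
proof -
  have "\<bar>det A\<bar> = \<bar>scaled_tail_det (\<lambda>i j. A $$ (i, j)) s t n 0\<bar> * (s ^ (n - 1) * t)"
    using A hess_set_subset_hessenberg_mat s t by (intro abs_det_eq_scaled_tail_det) auto
  also have "\<dots> \<le> (1 + real (n div 2 * ((n - 1) div 2)) * (t / s)\<^sup>2) * (s ^ (n - 1) * t)"
  proof (rule mult_right_mono)
    show "\<bar>scaled_tail_det (\<lambda>i j. A $$ (i, j)) s t n 0\<bar> \<le> 1 + real (n div 2 * ((n - 1) div 2)) * (t / s)\<^sup>2"
      using unit_tri_system_abs_le [OF hess_set_unit_tri_system [OF A s t], of 0] s t n small by simp
  qed (use s t in simp)
  finally show ?thesis
    by (simp only: mult.commute)
qed

definition extremal_pattern :: "nat \<Rightarrow> nat \<Rightarrow> nat \<Rightarrow> bool" where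
  "extremal_pattern n i j \<longleftrightarrow>
     (i = 0 \<and> (j < n div 2 \<or> j = n - 1)) \<or>
     (1 \<le> i \<and> i \<le> n div 2 \<and> n div 2 \<le> j \<and> j < n - 1) \<or>
     (n div 2 < i \<and> j = n - 1)"

definition extremal_mat :: "real \<Rightarrow> real \<Rightarrow> nat \<Rightarrow> real mat" where
  "extremal_mat s t n = mat n n (\<lambda>(i, j).
     if i = Suc j then s else if i \<le> j \<and> extremal_pattern n i j then t else 0)"

lemma extremal_mat_hess_set: "0 \<le> t \<Longrightarrow> extremal_mat s t n \<in> hess_set s n {0..t}"
  by (auto simp: hess_set_def extremal_mat_def)

lemma extremal_scaled_tail_det_rec:
  assumes s: "0 < s" and t: "0 < t" and p: "p < n"
  shows "scaled_tail_det (\<lambda>i j. extremal_mat s t n $$ (i, j)) s t n p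
    = (if extremal_pattern n p (n - 1) then 1 else 0) - t / s *
      (\<Sum>q\<in>{Suc p..<n}. (if extremal_pattern n p (q - 1) then 1 else 0)
         * scaled_tail_det (\<lambda>i j. extremal_mat s t n $$ (i, j)) s t n q)"
proof -
  let ?A = "extremal_mat s t n"
  have entry: "?A $$ (p, q) = (if extremal_pattern n p q then t else 0)" if "p \<le> q" "q < n" for q
    using that by (simp add: extremal_mat_def)
  have "?A $$ (p, n - 1) / t = (if extremal_pattern n p (n - 1) then 1 else 0)"
    using p t by (simp add: entry)
  moreover have "(\<Sum>q\<in>{Suc p..<n}. ?A $$ (p, q - 1) / t * scaled_tail_det (\<lambda>i j. ?A $$ (i, j)) s t n q)
      = (\<Sum>q\<in>{Suc p..<n}. (if extremal_pattern n p (q - 1) then 1 else 0)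
           * scaled_tail_det (\<lambda>i j. ?A $$ (i, j)) s t n q)"
    using t by (intro sum.cong) (auto simp: entry)
  moreover note unit_tri_systemD(4) [OF hess_set_unit_tri_system [OF extremal_mat_hess_set s t] p]
  ultimately show ?thesis
    using t by simp
qed

lemma extremal_scaled_tail_det:
  assumes s: "0 < s" and t: "0 < t" and n: "0 < n"
  shows "scaled_tail_det (\<lambda>i j. extremal_mat s t n $$ (i, j)) s t n 0
    = 1 + real (n div 2 * ((n - 1) div 2)) * (t / s)\<^sup>2"
proof -
  define k where "k = n div 2"
  let ?E = "scaled_tail_det (\<lambda>i j. extremal_mat s t n $$ (i, j)) s t n"
  note rec = extremal_scaled_tail_det_rec [OF s t]
  have high: "?E p = 1" if "k < p" "p < n" for p
  proof -
    have "(\<Sum>q\<in>{Suc p..<n}. (if extremal_pattern n p (q - 1) then 1 else 0) * ?E q) = 0"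
      using that by (intro sum.neutral) (auto simp: extremal_pattern_def k_def)
    then show ?thesis
      using rec [OF that(2)] that by (simp add: extremal_pattern_def k_def)
  qed
  have mid: "?E p = - (t / s) * real (n - Suc k)" if "1 \<le> p" "p \<le> k" for p
  proof -
    have "(\<Sum>q\<in>{Suc p..<n}. (if extremal_pattern n p (q - 1) then 1 else 0) * ?E q) = (\<Sum>q\<in>{Suc k..<n}. 1)"
      using that high by (intro sum.mono_neutral_cong_right) (auto simp: extremal_pattern_def k_def)
    then show ?thesis
      using rec [of p] that n by (simp add: extremal_pattern_def k_def)
  qed
  have "(\<Sum>q\<in>{Suc 0..<n}. (if extremal_pattern n 0 (q - 1) then 1 else 0) * ?E q)
      = (\<Sum>q\<in>{Suc 0..<Suc k}. - (t / s) * real (n - Suc k))"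
    using mid n by (intro sum.mono_neutral_cong_right) (auto simp: extremal_pattern_def k_def)
  then have "?E 0 = 1 + (t / s)\<^sup>2 * real (k * (n - Suc k))"
    using rec [OF n] by (simp add: extremal_pattern_def power2_eq_square)
  moreover have "n - Suc k = (n - 1) div 2"
    unfolding k_def by linarith
  ultimately show ?thesis
    by (simp add: k_def mult.commute)
qed

lemma abs_det_extremal_mat:
  assumes s: "0 < s" and t: "0 < t" and n: "0 < n"
  shows "\<bar>det (extremal_mat s t n)\<bar> = s ^ (n - 1) * t * (1 + real (n div 2 * ((n - 1) div 2)) * (t / s)\<^sup>2)"
proof -
  have "extremal_mat s t n \<in> hessenberg_mat s n"
    using extremal_mat_hess_set [of t s n] hess_set_subset_hessenberg_mat [of s n] t by auto
  then have "\<bar>det (extremal_mat s t n)\<bar>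
      = \<bar>scaled_tail_det (\<lambda>i j. extremal_mat s t n $$ (i, j)) s t n 0\<bar> * (s ^ (n - 1) * t)"
    using s t by (rule abs_det_eq_scaled_tail_det)
  also have "\<bar>scaled_tail_det (\<lambda>i j. extremal_mat s t n $$ (i, j)) s t n 0\<bar>
      = 1 + real (n div 2 * ((n - 1) div 2)) * (t / s)\<^sup>2"
    unfolding extremal_scaled_tail_det [OF s t n] by (intro abs_of_nonneg) simp
  finally show ?thesis
    by (simp only: mult.commute)
qed

theorem theorem2p9:
  fixes n :: nat and s t :: real
  assumes "n \<ge> 1" and "t > 0" and "s / t > 4 / 5 * real n ^ 2"
  shows "(\<exists>A \<in> hess_set s n {0..t}.
            \<bar>det A\<bar> = s ^ (n - 1) * t + real ((n div 2) * ((n - 1) div 2)) * s ^ (n - 3) * t ^ 3)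
       \<and> (\<forall>A \<in> hess_set s n {0..t}.
            \<bar>det A\<bar> \<le> s ^ (n - 1) * t + real ((n div 2) * ((n - 1) div 2)) * s ^ (n - 3) * t ^ 3)"
proof -
  have n: "0 < n" and t: "0 < t"
    using assms(1,2) by simp_all
  have "0 \<le> 4 / 5 * real n ^ 2"
    by simp
  then have "0 < s / t"
    using assms(3) by linarith
  then have s: "0 < s"
    using t by (simp add: zero_less_divide_iff)
  have small: "t / s * real n ^ 2 \<le> 5 / 4"
    using assms(3) s t by (simp add: field_simps)
  show ?thesis
    using extremal_mat_hess_set [of t s n] abs_det_extremal_mat [OF s t n]
      abs_det_hess_set_le [OF _ s t n small] scaled_bound_eq [OF s, of n t] t
    by auto
qed

end
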